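(* Let $\mathbb{V}$ be a BIT speciale variety with signature $\mathcal{F}$ and BIT speciale terms $0,\alpha_1,\dots,\alpha_n,\theta$, let $A$ be a $\mathbb{V}$-algebra and $H$ a non-empty subset of $A$. For an operation $\tau$ of arity $k$, elements $a_1,\dots,a_k\in A$ and $1\le i\le n$, consider the conditions (A) $\alpha_i\big(\tau(\theta(h_{11},\dots,h_{1n},a_1),\dots,\theta(h_{k1},\dots,h_{kn},a_k)),\tau(a_1,\dots,a_k)\big)\in H$ for all $h_{rs}\in H$; (B) $\alpha_i(\theta(h_1,\dots,h_n,a),\theta(h'_1,\dots,h'_n,a))\in H$ for all $a\in A$ and all $h_1,\dots,h_n,h'_1,\dots,h'_n\in H$; (C$_j$) $\alpha_i\big(\tau(a_1,\dots,a_{j-1},\theta(h_1,\dots,h_n,a_j),a_{j+1},\dots,a_k),\tau(a_1,\dots,a_k)\big)\in H$ for all $h_1,\dots,h_n\in H$ (where $1\le j\le k$). Then the following are equivalent: (i) $H$ is an ideal of $A$; (ii) $H$ is closed under $\theta$ and under each $\alpha_i$ ($1\le i\le n$), and (A) holds for every $\tau\in\mathcal{F}\cup\{\theta\}$, every $1\le i\le n$ and all $a_1,\dots,a_k\in A$; (iii) $0\in H$, $H$ is closed under $\theta$ and under $\alpha_i(-,0)$ for each $i$, and (A) holds for every $\tau\in\mathcal{F}\cup\{\theta\}\cup\{\alpha_j\mid1\le j\le n\}$, every $1\le i\le n$ and all $a_1,\dots,a_k\in A$; (iv) $H$ is closed under $\theta$ and under $\alpha_i(-,0)$ for each $i$,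 (A) holds for every $\tau\in\mathcal{F}$, every $1\le i\le n$ and all $a_1,\dots,a_k\in A$, and (B) holds for every $1\le i\le n$; (v) $H$ is closed under $\theta$ and under $\alpha_i(-,0)$ for each $i$, (B) holds for every $1\le i\le n$, and (C$_j$) holds for every $\tau\in\mathcal{F}$ of arity $k$, all $a_1,\dots,a_k\in A$ and all $1\le i\le n$, $1\le j\le k$; (vi) $0\in H$, $H$ is closed under $\theta$ and under $\alpha_i(-,0)$ for each $i$, for every $a\in A$ the $\sim_H$-class of $a$ equals $\theta(H,\dots,H,a)$, and (C$_j$) holds for every $\tau\in\mathcal{F}$ of arity $k$, all $a_1,\dots,a_k\in A$ and all $1\le i\le n$, $1\le j\le k$; (vii) $\sim_H$ is a congruence on $A$ and $H$ is its kernel (its class containing $0$). Moreover, if $\mathbb{V}$ is semi-abelian, then the equivalences remain valid when, in (ii), "closed under $\theta$ and each $\alpha_i$", in (iii), "$0\in H$ and closed under $\theta$ and each $\alpha_i(-,0)$", and in (iv) and (v), "closed under $\theta$ and each $\alpha_i(-,0)$" are replaced by "$H$ is a subalgebra of $A$".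
   Context: $\mathbb{V}$ is a variety with signature $\mathcal{F}$ (finitary operation symbols, constants being 0-ary). BIT speciale: the algebraic theory of $\mathbb{V}$ contains a constant $0$ and, for some $n\ge1$, binary terms $\alpha_1,\dots,\alpha_n$ and an $(n+1)$-ary term $\theta$ with identities $\alpha_i(x,x)=0$ and $\theta(\alpha_1(x,y),\dots,\alpha_n(x,y),y)=x$. Semi-abelian means (equivalently) BIT speciale with $0$ the only constant of the algebraic theory. An ideal term in variables $y_1,\dots,y_p$ is a term $t(x_1,\dots,x_m,y_1,\dots,y_p)$ with $t(x_1,\dots,x_m,0,\dots,0)=0$ an identity of $\mathbb{V}$; a non-empty $H\subseteq A$ is an ideal if $t(a_1,\dots,a_m,b_1,\dots,b_p)\in H$ for every ideal term $t$, all $a_r\in A$, $b_s\in H$. Notation: $\theta(H,\dots,H,a)=\{\theta(h_1,\dots,h_n,a)\mid h_1,\dots,h_n\in H\}$. For $a,b\in A$, $a\sim_H b$ iff $\theta(H,\dots,H,a)=\theta(H,\dots,H,b)$; this is an equivalence relation. "Closed under $\theta$" means $\theta(h_1,\dots,h_{n+1})\in H$ for all $h_r\in H$; "closed under $\alpha_i$" means $\alpha_i(h,h')\in H$ for all $h,h'\in H$; "closed under $\alpha_i(-,0)$" means $\alpha_i(h,0)\in H$ for all $h\in H$. When $\tau$ is a constant ($k=0$), condition (A) reads $\alpha_i(\tau,\tau)\in H$. *)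

theory Defs
  imports Main
begin

datatype 'f trm = Var nat | App 'f "'f trm list"

fun vars :: "'f trm \<Rightarrow> nat set" where
  "vars (Var v) = {v}"
| "vars (App f ts) = (\<Union>t\<in>set ts. vars t)"

fun wf_trm :: "('f \<Rightarrow> nat) \<Rightarrow> 'f trm \<Rightarrow> bool" where
  "wf_trm ar (Var v) = True"
| "wf_trm ar (App f ts) = (length ts = ar f \<and> (\<forall>t\<in>set ts. wf_trm ar t))"

fun subst :: "(nat \<Rightarrow> 'f trm) \<Rightarrow> 'f trm \<Rightarrow> 'f trm" where
  "subst \<sigma> (Var v) = \<sigma> v"
| "subst \<sigma> (App f ts) = App f (map (subst \<sigma>) ts)"

fun eval :: "('f \<Rightarrow> 'a list \<Rightarrow> 'a) \<Rightarrow> (nat \<Rightarrow> 'a) \<Rightarrow> 'f trm \<Rightarrow> 'a" where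
  "eval ops \<rho> (Var v) = \<rho> v"
| "eval ops \<rho> (App f ts) = ops f (map (eval ops \<rho>) ts)"

text \<open>The variety V is presented by a set E of (well-formed) identities.
  An identity of V is an equational consequence of E (Birkhoff's equational logic).\<close>
inductive derivable :: "('f \<Rightarrow> nat) \<Rightarrow> ('f trm \<times> 'f trm) set \<Rightarrow> 'f trm \<Rightarrow> 'f trm \<Rightarrow> bool"
  for ar E where
  ax: "(s, t) \<in> E \<Longrightarrow> derivable ar E s t"
| refl: "wf_trm ar t \<Longrightarrow> derivable ar E t t"
| sym: "derivable ar E s t \<Longrightarrow> derivable ar E t s"
| trans: "derivable ar E s t \<Longrightarrow> derivable ar E t u \<Longrightarrow> derivable ar E s u"
| cong: "length ss = ar f \<Longrightarrow> length ts = ar f \<Longrightarrow> list_all2 (derivable ar E) ss ts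
          \<Longrightarrow> derivable ar E (App f ss) (App f ts)"
| inst: "derivable ar E s t \<Longrightarrow> (\<forall>v. wf_trm ar (\<sigma> v))
          \<Longrightarrow> derivable ar E (subst \<sigma> s) (subst \<sigma> t)"

definition variety_eqs :: "('f \<Rightarrow> nat) \<Rightarrow> ('f trm \<times> 'f trm) set \<Rightarrow> bool" where
  "variety_eqs ar E \<longleftrightarrow> (\<forall>(s, t)\<in>E. wf_trm ar s \<and> wf_trm ar t)"

definition is_alg :: "('f \<Rightarrow> nat) \<Rightarrow> 'a set \<Rightarrow> ('f \<Rightarrow> 'a list \<Rightarrow> 'a) \<Rightarrow> bool" where
  "is_alg ar A ops \<longleftrightarrow> (\<forall>f as. length as = ar f \<longrightarrow> set as \<subseteq> A \<longrightarrow> ops f as \<in> A)"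

definition V_alg :: "('f \<Rightarrow> nat) \<Rightarrow> ('f trm \<times> 'f trm) set \<Rightarrow> 'a set \<Rightarrow> ('f \<Rightarrow> 'a list \<Rightarrow> 'a) \<Rightarrow> bool" where
  "V_alg ar E A ops \<longleftrightarrow> is_alg ar A ops \<and>
     (\<forall>(s, t)\<in>E. \<forall>\<rho>. (\<forall>v. \<rho> v \<in> A) \<longrightarrow> eval ops \<rho> s = eval ops \<rho> t)"

text \<open>Indexing convention: alpha 0, ..., alpha (n-1) stand for alpha_1, ..., alpha_n;
  alpha i is binary in the variables Var 0 (= x) and Var 1 (= y);
  theta is (n+1)-ary in Var 0, ..., Var n, the last argument being Var n;
  zero is a closed term (a constant of the algebraic theory).\<close>
definition bit_speciale ::
  "('f \<Rightarrow> nat) \<Rightarrow> ('f trm \<times> 'f trm) set \<Rightarrow> nat \<Rightarrow> 'f trm \<Rightarrow> (nat \<Rightarrow> 'f trm) \<Rightarrow> 'f trm \<Rightarrow> bool" where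
  "bit_speciale ar E n zero alpha theta \<longleftrightarrow>
     variety_eqs ar E \<and> 1 \<le> n \<and>
     wf_trm ar zero \<and> vars zero = {} \<and>
     (\<forall>i<n. wf_trm ar (alpha i) \<and> vars (alpha i) \<subseteq> {0, 1}) \<and>
     wf_trm ar theta \<and> vars theta \<subseteq> {0..n} \<and>
     (\<forall>i<n. derivable ar E (subst (\<lambda>_. Var 0) (alpha i)) zero) \<and>
     derivable ar E (subst (\<lambda>j. if j < n then alpha j else Var 1) theta) (Var 0)"

definition semi_abelian ::
  "('f \<Rightarrow> nat) \<Rightarrow> ('f trm \<times> 'f trm) set \<Rightarrow> nat \<Rightarrow> 'f trm \<Rightarrow> (nat \<Rightarrow> 'f trm) \<Rightarrow> 'f trm \<Rightarrow> bool" where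
  "semi_abelian ar E n zero alpha theta \<longleftrightarrow>
     bit_speciale ar E n zero alpha theta \<and>
     (\<forall>c. wf_trm ar c \<and> vars c = {} \<longrightarrow> derivable ar E c zero)"

definition zeroA :: "('f \<Rightarrow> 'a list \<Rightarrow> 'a) \<Rightarrow> 'f trm \<Rightarrow> 'a" where
  "zeroA ops zero = eval ops (\<lambda>_. undefined) zero"

definition thA :: "('f \<Rightarrow> 'a list \<Rightarrow> 'a) \<Rightarrow> nat \<Rightarrow> 'f trm \<Rightarrow> (nat \<Rightarrow> 'a) \<Rightarrow> 'a \<Rightarrow> 'a" where
  "thA ops n theta hs a = eval ops (\<lambda>j. if j < n then hs j else a) theta"

definition alA :: "('f \<Rightarrow> 'a list \<Rightarrow> 'a) \<Rightarrow> (nat \<Rightarrow> 'f trm) \<Rightarrow> nat \<Rightarrow> 'a \<Rightarrow> 'a \<Rightarrow> 'a" where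
  "alA ops alpha i x y = eval ops (\<lambda>j. if j = 0 then x else y) (alpha i)"

definition thset :: "('f \<Rightarrow> 'a list \<Rightarrow> 'a) \<Rightarrow> nat \<Rightarrow> 'f trm \<Rightarrow> 'a set \<Rightarrow> 'a \<Rightarrow> 'a set" where
  "thset ops n theta H a = {thA ops n theta hs a | hs. \<forall>s<n. hs s \<in> H}"

definition simH :: "('f \<Rightarrow> 'a list \<Rightarrow> 'a) \<Rightarrow> nat \<Rightarrow> 'f trm \<Rightarrow> 'a set \<Rightarrow> 'a set \<Rightarrow> ('a \<times> 'a) set" where
  "simH ops n theta A H = {(a, b). a \<in> A \<and> b \<in> A \<and> thset ops n theta H a = thset ops n theta H b}"

definition op_trm :: "('f \<Rightarrow> nat) \<Rightarrow> 'f \<Rightarrow> 'f trm" where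
  "op_trm ar f = App f (map Var [0..<ar f])"

text \<open>Ideal term: t in the variables Y (the y's; the other variables are the x's)
  with t(x, 0, ..., 0) = 0 an identity of V.\<close>
definition ideal_term :: "('f \<Rightarrow> nat) \<Rightarrow> ('f trm \<times> 'f trm) set \<Rightarrow> 'f trm \<Rightarrow> 'f trm \<Rightarrow> nat set \<Rightarrow> bool" where
  "ideal_term ar E zero t Y \<longleftrightarrow> wf_trm ar t \<and>
     derivable ar E (subst (\<lambda>v. if v \<in> Y then zero else Var v) t) zero"

definition is_ideal ::
  "('f \<Rightarrow> nat) \<Rightarrow> ('f trm \<times> 'f trm) set \<Rightarrow> ('f \<Rightarrow> 'a list \<Rightarrow> 'a) \<Rightarrow> 'f trm \<Rightarrow> 'a set \<Rightarrow> 'a set \<Rightarrow> bool" where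
  "is_ideal ar E ops zero A H \<longleftrightarrow> H \<noteq> {} \<and> H \<subseteq> A \<and>
     (\<forall>t Y. ideal_term ar E zero t Y \<longrightarrow>
        (\<forall>\<rho>. (\<forall>v. \<rho> v \<in> A) \<longrightarrow> (\<forall>v\<in>Y. \<rho> v \<in> H) \<longrightarrow> eval ops \<rho> t \<in> H))"

definition congruence_on :: "('f \<Rightarrow> nat) \<Rightarrow> ('f \<Rightarrow> 'a list \<Rightarrow> 'a) \<Rightarrow> 'a set \<Rightarrow> ('a \<times> 'a) set \<Rightarrow> bool" where
  "congruence_on ar ops A R \<longleftrightarrow> equiv A R \<and>
     (\<forall>f as bs. length as = ar f \<longrightarrow> length bs = ar f \<longrightarrow> list_all2 (\<lambda>x y. (x, y) \<in> R) as bs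
        \<longrightarrow> (ops f as, ops f bs) \<in> R)"

definition subalgebra :: "('f \<Rightarrow> nat) \<Rightarrow> ('f \<Rightarrow> 'a list \<Rightarrow> 'a) \<Rightarrow> 'a set \<Rightarrow> 'a set \<Rightarrow> bool" where
  "subalgebra ar ops A H \<longleftrightarrow> H \<subseteq> A \<and> is_alg ar H ops"

definition closed_theta :: "('f \<Rightarrow> 'a list \<Rightarrow> 'a) \<Rightarrow> nat \<Rightarrow> 'f trm \<Rightarrow> 'a set \<Rightarrow> bool" where
  "closed_theta ops n theta H \<longleftrightarrow>
     (\<forall>hs a. (\<forall>s<n. hs s \<in> H) \<longrightarrow> a \<in> H \<longrightarrow> thA ops n theta hs a \<in> H)"

definition closed_alpha :: "('f \<Rightarrow> 'a list \<Rightarrow> 'a) \<Rightarrow> (nat \<Rightarrow> 'f trm) \<Rightarrow> nat \<Rightarrow> 'a set \<Rightarrow> bool" where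
  "closed_alpha ops alpha i H \<longleftrightarrow> (\<forall>x\<in>H. \<forall>y\<in>H. alA ops alpha i x y \<in> H)"

definition closed_alpha0 :: "('f \<Rightarrow> 'a list \<Rightarrow> 'a) \<Rightarrow> 'f trm \<Rightarrow> (nat \<Rightarrow> 'f trm) \<Rightarrow> nat \<Rightarrow> 'a set \<Rightarrow> bool" where
  "closed_alpha0 ops zero alpha i H \<longleftrightarrow> (\<forall>x\<in>H. alA ops alpha i x (zeroA ops zero) \<in> H)"

text \<open>Condition (A) for the k-ary term operation tau (a term in Var 0, ..., Var (k-1)), index i,
  for all a_1..a_k in A (a r = a_(r+1)) and all h_rs in H (h r s = h_(r+1)(s+1)).\<close>
definition condA ::
  "('f \<Rightarrow> 'a list \<Rightarrow> 'a) \<Rightarrow> nat \<Rightarrow> (nat \<Rightarrow> 'f trm) \<Rightarrow> 'f trm \<Rightarrow> 'a set \<Rightarrow> 'a set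
     \<Rightarrow> 'f trm \<Rightarrow> nat \<Rightarrow> nat \<Rightarrow> bool" where
  "condA ops n alpha theta A H tau k i \<longleftrightarrow>
     (\<forall>a. (\<forall>r<k. a r \<in> A) \<longrightarrow>
       (\<forall>h. (\<forall>r<k. \<forall>s<n. h r s \<in> H) \<longrightarrow>
          alA ops alpha i (eval ops (\<lambda>r. thA ops n theta (h r) (a r)) tau) (eval ops a tau) \<in> H))"

definition condB ::
  "('f \<Rightarrow> 'a list \<Rightarrow> 'a) \<Rightarrow> nat \<Rightarrow> (nat \<Rightarrow> 'f trm) \<Rightarrow> 'f trm \<Rightarrow> 'a set \<Rightarrow> 'a set \<Rightarrow> nat \<Rightarrow> bool" where
  "condB ops n alpha theta A H i \<longleftrightarrow>
     (\<forall>a\<in>A. \<forall>h h'. (\<forall>s<n. h s \<in> H \<and> h' s \<in> H) \<longrightarrow>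
        alA ops alpha i (thA ops n theta h a) (thA ops n theta h' a) \<in> H)"

text \<open>Condition (C_j) for all 1 <= j <= k (here j < k, 0-based) and all a_1..a_k in A.\<close>
definition condC ::
  "('f \<Rightarrow> 'a list \<Rightarrow> 'a) \<Rightarrow> nat \<Rightarrow> (nat \<Rightarrow> 'f trm) \<Rightarrow> 'f trm \<Rightarrow> 'a set \<Rightarrow> 'a set
     \<Rightarrow> 'f trm \<Rightarrow> nat \<Rightarrow> nat \<Rightarrow> bool" where
  "condC ops n alpha theta A H tau k i \<longleftrightarrow>
     (\<forall>a. (\<forall>r<k. a r \<in> A) \<longrightarrow> (\<forall>j<k. \<forall>h. (\<forall>s<n. h s \<in> H) \<longrightarrow>
        alA ops alpha i (eval ops (a(j := thA ops n theta h (a j))) tau) (eval ops a tau) \<in> H))"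

end

theory Submission
  imports Defs
begin

(* The forward direction (i) => (iii) evaluates explicit ideal terms; for condition (A) the term is
   alpha_i(tau(theta(y_1, x_1), ..., theta(y_k, x_k)), tau(x_1, ..., x_k)), which becomes
   alpha_i(tau(x), tau(x)) = 0 once the y's are set to 0.  The chain (iii) => ... => (vii) rests on
   the two BIT speciale identities: alpha_i(x, x) = 0 gives theta(0, ..., 0, y) = y, and
   x = theta(alpha_1(x, y), ..., alpha_n(x, y), y) shows that x lies in theta(H, ..., H, y) as soon as
   all alpha_i(x, y) lie in H.  Under (B) this makes theta(H, ..., H, a) the ~_H-class of a, and (C_j)
   says that ~_H is compatible with every operation in one argument at a time, hence a congruence.
   Conversely the class of 0 of any congruence is an ideal, since an ideal term evaluated with its
   H-arguments replaced by 0 yields 0 and stays congruent.  In a semi-abelian variety every basic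
   operation preserves 0, so ideals are subalgebras. *)

lemma subst_cong: "(\<And>v. v \<in> vars t \<Longrightarrow> \<sigma> v = \<sigma>' v) \<Longrightarrow> subst \<sigma> t = subst \<sigma>' t"
  by (induction t) auto

lemma subst_subst: "subst \<sigma> (subst \<tau> t) = subst (\<lambda>v. subst \<sigma> (\<tau> v)) t"
  by (induction t) auto

lemma subst_Var_id: "subst Var t = t"
  by (induction t) (auto simp: map_idI)

lemma subst_ground: "vars t = {} \<Longrightarrow> subst \<sigma> t = t"
  using subst_cong[of t \<sigma> Var] subst_Var_id by auto

lemma vars_subst: "vars (subst \<sigma> t) = (\<Union>v\<in>vars t. vars (\<sigma> v))"
  by (induction t) auto

lemma wf_trm_subst:
  "wf_trm ar t \<Longrightarrow> (\<And>v. v \<in> vars t \<Longrightarrow> wf_trm ar (\<sigma> v)) \<Longrightarrow> wf_trm ar (subst \<sigma> t)"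
  by (induction t) auto

lemma eval_cong: "(\<And>v. v \<in> vars t \<Longrightarrow> \<rho> v = \<rho>' v) \<Longrightarrow> eval ops \<rho> t = eval ops \<rho>' t"
proof (induction t)
  case (App f ts)
  have "map (eval ops \<rho>) ts = map (eval ops \<rho>') ts"
    by (rule map_cong) (use App in auto)
  then show ?case by (simp only: eval.simps)
qed simp

lemma eval_subst: "eval ops \<rho> (subst \<sigma> t) = eval ops (\<lambda>v. eval ops \<rho> (\<sigma> v)) t"
  by (induction t) (auto cong: map_cong)

lemma eval_ground: "vars t = {} \<Longrightarrow> eval ops \<rho> t = eval ops \<rho>' t"
  by (rule eval_cong) simp

lemma eval_in_carrier:
  "is_alg ar A ops \<Longrightarrow> wf_trm ar t \<Longrightarrow> (\<And>v. v \<in> vars t \<Longrightarrow> \<rho> v \<in> A) \<Longrightarrow> eval ops \<rho> t \<in> A"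
proof (induction t)
  case (App f ts)
  then have "set (map (eval ops \<rho>) ts) \<subseteq> A" by auto
  then show ?case using App.prems(1,2) by (auto simp: is_alg_def)
qed simp

lemma V_alg_is_alg: "V_alg ar E A ops \<Longrightarrow> is_alg ar A ops"
  by (simp add: V_alg_def)

lemma derivable_sound:
  "derivable ar E s t \<Longrightarrow> V_alg ar E A ops \<Longrightarrow> (\<forall>v. \<rho> v \<in> A) \<Longrightarrow> eval ops \<rho> s = eval ops \<rho> t"
proof (induction arbitrary: \<rho> rule: derivable.induct)
  case (ax s t)
  then show ?case by (auto simp: V_alg_def)
next
  case (cong ss f ts)
  then have "map (eval ops \<rho>) ss = map (eval ops \<rho>) ts"
    by (auto simp: list_all2_conv_all_nth intro!: nth_equalityI)
  then show ?case by simp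
next
  case (inst s t \<sigma>)
  have "\<forall>v. eval ops \<rho> (\<sigma> v) \<in> A"
    using inst by (blast intro: eval_in_carrier V_alg_is_alg)
  then show ?case using inst by (simp add: eval_subst)
qed auto

lemma derivable_subst_cong:
  "wf_trm ar u \<Longrightarrow> (\<And>v. v \<in> vars u \<Longrightarrow> derivable ar E (\<sigma> v) (\<sigma>' v))
    \<Longrightarrow> derivable ar E (subst \<sigma> u) (subst \<sigma>' u)"
proof (induction u)
  case (App f ts)
  have "list_all2 (derivable ar E) (map (subst \<sigma>) ts) (map (subst \<sigma>') ts)"
    unfolding list_all2_conv_all_nth
  proof (intro conjI allI impI)
    fix r assume r: "r < length (map (subst \<sigma>) ts)"
    then have t: "ts ! r \<in> set ts" by simp
    have "derivable ar E (subst \<sigma> (ts ! r)) (subst \<sigma>' (ts ! r))"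
      by (rule App.IH[OF t]) (use App.prems t in auto)
    then show "derivable ar E (map (subst \<sigma>) ts ! r) (map (subst \<sigma>') ts ! r)"
      using r by simp
  qed simp
  then show ?case using App.prems(1) by (auto intro!: derivable.cong)
qed simp

lemma vars_op_trm: "vars (op_trm ar f) = {0..<ar f}"
  by (auto simp: op_trm_def)

lemma wf_trm_op_trm: "wf_trm ar (op_trm ar f)"
  by (auto simp: op_trm_def)

lemma eval_op_trm: "eval ops \<rho> (op_trm ar f) = ops f (map \<rho> [0..<ar f])"
  by (simp add: op_trm_def comp_def)

lemma congruence_on_eval:
  assumes "congruence_on ar ops A R" and "wf_trm ar t" and "\<forall>v. (\<rho> v, \<rho>' v) \<in> R"
  shows "(eval ops \<rho> t, eval ops \<rho>' t) \<in> R"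
  using assms(2)
proof (induction t)
  case (App f ts)
  then have "list_all2 (\<lambda>x y. (x, y) \<in> R) (map (eval ops \<rho>) ts) (map (eval ops \<rho>') ts)"
    by (auto simp: list_all2_conv_all_nth)
  then show ?case using assms(1) App.prems unfolding congruence_on_def by auto
qed (use assms(3) in simp)

lemma congruence_onI_single_argument:
  assumes R: "equiv A R" and alg: "is_alg ar A ops"
    and single: "\<And>f cs j b. length cs = ar f \<Longrightarrow> set cs \<subseteq> A \<Longrightarrow> j < ar f \<Longrightarrow> (cs ! j, b) \<in> R
                    \<Longrightarrow> (ops f cs, ops f (cs[j := b])) \<in> R"
  shows "congruence_on ar ops A R"
  unfolding congruence_on_def
proof (intro conjI R allI impI)
  fix f as bs
  assume la: "length as = ar f" and lb: "length bs = ar f"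
    and rel: "list_all2 (\<lambda>x y. (x, y) \<in> R) as bs"
  have RA: "R \<subseteq> A \<times> A" using R by (simp add: equiv_def refl_on_def)
  have as_bs: "(as ! r, bs ! r) \<in> R" if "r < ar f" for r
    using rel that la by (auto simp: list_all2_conv_all_nth)
  then have "set as \<subseteq> A" "set bs \<subseteq> A"
    using RA la lb by (fastforce simp: in_set_conv_nth)+
  define mix where "mix m = take m bs @ drop m as" for m
  have mix_A: "set (mix m) \<subseteq> A" for m
    using \<open>set as \<subseteq> A\<close> \<open>set bs \<subseteq> A\<close> set_take_subset set_drop_subset unfolding mix_def by fastforce
  have "(ops f as, ops f (mix m)) \<in> R" if "m \<le> ar f" for m
    using that
  proof (induction m)
    case 0
    have "ops f as \<in> A" using alg \<open>set as \<subseteq> A\<close> la by (simp add: is_alg_def)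
    then show ?case using R by (simp add: mix_def equiv_def refl_on_def)
  next
    case (Suc m)
    have m: "m < ar f" using Suc.prems by simp
    have "(ops f (mix m), ops f ((mix m)[m := bs ! m])) \<in> R"
    proof (rule single)
      show "length (mix m) = ar f" using m la lb by (simp add: mix_def)
      show "(mix m ! m, bs ! m) \<in> R" using as_bs[OF m] m la lb by (simp add: mix_def nth_append)
    qed (use mix_A m in auto)
    moreover have "(mix m)[m := bs ! m] = mix (Suc m)"
      using m la lb by (auto simp: mix_def nth_append nth_list_update intro!: nth_equalityI)
    ultimately show ?case using Suc R by (auto simp: equiv_def elim: transE)
  qed
  moreover have "mix (ar f) = bs" using lb by (simp add: mix_def la)
  ultimately show "(ops f as, ops f bs) \<in> R" by fastforce
qed

lemma ideal_if_congruence_kernel: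
  assumes alg: "V_alg ar E A ops" and C: "congruence_on ar ops A R" and ground: "vars zero = {}"
    and H: "H = R `` {zeroA ops zero}" and Hne: "H \<noteq> {}"
  shows "is_ideal ar E ops zero A H"
  unfolding is_ideal_def
proof (intro conjI Hne allI impI)
  have equiv: "equiv A R" using C by (simp add: congruence_on_def)
  then show "H \<subseteq> A" using H by (auto simp: equiv_def refl_on_def)
  fix t Y \<rho> assume it: "ideal_term ar E zero t Y" and \<rho>A: "\<forall>v. \<rho> v \<in> A" and \<rho>H: "\<forall>v\<in>Y. \<rho> v \<in> H"
  have eval_zero: "eval ops \<sigma> zero = zeroA ops zero" for \<sigma>
    unfolding zeroA_def using ground by (rule eval_ground)
  define \<rho>0 where "\<rho>0 = (\<lambda>v. if v \<in> Y then zeroA ops zero else \<rho> v)"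
  have "eval ops \<rho> (subst (\<lambda>v. if v \<in> Y then zero else Var v) t) = eval ops \<rho> zero"
    using it alg \<rho>A by (auto simp: ideal_term_def intro: derivable_sound)
  then have "eval ops \<rho>0 t = zeroA ops zero"
    unfolding \<rho>0_def by (simp add: eval_subst eval_zero if_distrib cong: if_cong)
  moreover have "(eval ops \<rho>0 t, eval ops \<rho> t) \<in> R"
  proof (rule congruence_on_eval[OF C])
    show "wf_trm ar t" using it by (simp add: ideal_term_def)
    show "\<forall>v. (\<rho>0 v, \<rho> v) \<in> R"
      using \<rho>H H \<rho>A equiv by (auto simp: \<rho>0_def equiv_def refl_on_def)
  qed
  ultimately show "eval ops \<rho> t \<in> H" using H by simp
qed

definition theta_slot :: "nat \<Rightarrow> 'f trm \<Rightarrow> nat \<Rightarrow> nat \<Rightarrow> 'f trm" where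
  "theta_slot n theta k r = subst (\<lambda>j. if j < n then Var (k + r * n + j) else Var r) theta"

locale bit_speciale_algebra =
  fixes ar :: "'f \<Rightarrow> nat" and E :: "('f trm \<times> 'f trm) set"
    and n :: nat and zero :: "'f trm" and alpha :: "nat \<Rightarrow> 'f trm" and theta :: "'f trm"
    and A :: "'a set" and ops :: "'f \<Rightarrow> 'a list \<Rightarrow> 'a"
  assumes bit: "bit_speciale ar E n zero alpha theta"
    and alg: "V_alg ar E A ops"
begin

lemma n_pos: "1 \<le> n"
  and wf_zero: "wf_trm ar zero" and vars_zero: "vars zero = {}"
  and wf_alpha: "i < n \<Longrightarrow> wf_trm ar (alpha i)" and vars_alpha: "i < n \<Longrightarrow> vars (alpha i) \<subseteq> {0..<2}"
  and wf_theta: "wf_trm ar theta" and vars_theta: "vars theta \<subseteq> {0..<Suc n}"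
  and alpha_identity: "i < n \<Longrightarrow> derivable ar E (subst (\<lambda>_. Var 0) (alpha i)) zero"
  and theta_identity: "derivable ar E (subst (\<lambda>j. if j < n then alpha j else Var 1) theta) (Var 0)"
  using bit unfolding bit_speciale_def by (fastforce simp flip: atLeastLessThanSuc_atLeastAtMost)+

abbreviation "zA \<equiv> zeroA ops zero"
abbreviation "th \<equiv> thA ops n theta"
abbreviation "al \<equiv> alA ops alpha"

lemma eval_zero: "eval ops \<rho> zero = zA"
  unfolding zeroA_def using vars_zero by (rule eval_ground)

lemma derivable_alpha_diag: "i < n \<Longrightarrow> wf_trm ar u \<Longrightarrow> derivable ar E (subst (\<lambda>_. u) (alpha i)) zero"
  using derivable.inst[OF alpha_identity, of i "\<lambda>_. u"]
  by (simp add: subst_subst subst_ground[OF vars_zero])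

lemma derivable_theta_zeros:
  assumes u: "wf_trm ar u"
  shows "derivable ar E (subst (\<lambda>j. if j < n then zero else u) theta) u"
proof -
  let ?\<sigma> = "\<lambda>j. if j < n then subst (\<lambda>_. u) (alpha j) else u"
  have "derivable ar E (subst (\<lambda>j. if j < n then zero else u) theta) (subst ?\<sigma> theta)"
    by (rule derivable_subst_cong[OF wf_theta])
      (auto intro: derivable.sym derivable_alpha_diag derivable.refl u)
  moreover have "derivable ar E (subst ?\<sigma> theta) u"
    using derivable.inst[OF theta_identity, of "\<lambda>_. u"] u
    by (simp add: subst_subst if_distrib cong: if_cong)
  ultimately show ?thesis by (rule derivable.trans)
qed

lemma alpha_diag: "i < n \<Longrightarrow> x \<in> A \<Longrightarrow> al i x x = zA"
  using derivable_sound[OF alpha_identity alg, of i "\<lambda>_. x"] by (simp add: eval_subst alA_def eval_zero)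

lemma theta_alpha: "x \<in> A \<Longrightarrow> y \<in> A \<Longrightarrow> th (\<lambda>j. al j x y) y = x"
  using derivable_sound[OF theta_identity alg, of "\<lambda>v. if v = 0 then x else y"]
  by (simp add: eval_subst thA_def alA_def if_distrib cong: if_cong)

lemma theta_cong: "(\<And>s. s < n \<Longrightarrow> h s = h' s) \<Longrightarrow> th h a = th h' a"
  unfolding thA_def by (rule eval_cong) auto

lemma theta_zeros: "y \<in> A \<Longrightarrow> th (\<lambda>_. zA) y = y"
  using theta_cong[of "\<lambda>_. zA" "\<lambda>j. al j y y" y] alpha_diag theta_alpha by simp

lemma theta_in_carrier: "(\<And>s. s < n \<Longrightarrow> h s \<in> A) \<Longrightarrow> a \<in> A \<Longrightarrow> th h a \<in> A"
  unfolding thA_def by (rule eval_in_carrier[OF V_alg_is_alg[OF alg] wf_theta]) auto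

lemma alpha_in_carrier: "i < n \<Longrightarrow> x \<in> A \<Longrightarrow> y \<in> A \<Longrightarrow> al i x y \<in> A"
  unfolding alA_def by (rule eval_in_carrier[OF V_alg_is_alg[OF alg] wf_alpha]) auto

lemma eval_theta_slot: "eval ops \<rho> (theta_slot n theta k r) = th (\<lambda>s. \<rho> (k + r * n + s)) (\<rho> r)"
  unfolding theta_slot_def eval_subst thA_def by (rule eval_cong) auto

lemma derivable_theta_slot_zeros:
  assumes "r < k"
  shows "derivable ar E (subst (\<lambda>v. if k \<le> v then zero else Var v) (theta_slot n theta k r)) (Var r)"
proof -
  have "subst (\<lambda>v. if k \<le> v then zero else Var v) (theta_slot n theta k r)
      = subst (\<lambda>j. if j < n then zero else Var r) theta"
    unfolding theta_slot_def subst_subst using assms by (auto intro!: subst_cong)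
  then show ?thesis using derivable_theta_zeros[of "Var r"] by simp
qed

end

locale bit_speciale_subset = bit_speciale_algebra +
  fixes H
  assumes H_sub: "H \<subseteq> A" and H_ne: "H \<noteq> {}"
begin

abbreviation "cls \<equiv> thset ops n theta H"

lemma condAD:
  "condA ops n alpha theta A H tau k i \<Longrightarrow> (\<And>r. r < k \<Longrightarrow> a r \<in> A)
    \<Longrightarrow> (\<And>r s. r < k \<Longrightarrow> s < n \<Longrightarrow> h r s \<in> H)
    \<Longrightarrow> al i (eval ops (\<lambda>r. th (h r) (a r)) tau) (eval ops a tau) \<in> H"
  unfolding condA_def by blast

lemma condCD:
  "condC ops n alpha theta A H tau k i \<Longrightarrow> (\<And>r. r < k \<Longrightarrow> a r \<in> A) \<Longrightarrow> j < k
    \<Longrightarrow> (\<And>s. s < n \<Longrightarrow> h s \<in> H)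
    \<Longrightarrow> al i (eval ops (a(j := th h (a j))) tau) (eval ops a tau) \<in> H"
  unfolding condC_def by blast

lemma zero_in_carrier: "zA \<in> A"
proof -
  obtain h where "h \<in> H" using H_ne by auto
  then have "eval ops (\<lambda>_. h) zero \<in> A"
    using H_sub by (auto intro!: eval_in_carrier[OF V_alg_is_alg[OF alg] wf_zero])
  then show ?thesis by (simp add: eval_zero)
qed

lemma thset_iff: "b \<in> cls a \<longleftrightarrow> (\<exists>h. b = th h a \<and> (\<forall>s<n. h s \<in> H))"
  by (auto simp: thset_def)

lemma thset_subset_carrier: "a \<in> A \<Longrightarrow> cls a \<subseteq> A"
  using H_sub by (force simp: thset_iff intro!: theta_in_carrier)

lemma thset_memI: "b \<in> A \<Longrightarrow> a \<in> A \<Longrightarrow> (\<And>i. i < n \<Longrightarrow> al i b a \<in> H) \<Longrightarrow> b \<in> cls a"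
  unfolding thset_iff by (intro exI[of _ "\<lambda>i. al i b a"]) (simp add: theta_alpha)

lemma thset_self: "zA \<in> H \<Longrightarrow> a \<in> A \<Longrightarrow> a \<in> cls a"
  unfolding thset_iff by (intro exI[of _ "\<lambda>_. zA"]) (simp add: theta_zeros)

lemma thset_zero:
  assumes "zA \<in> H" and "closed_theta ops n theta H" and "\<forall>i<n. closed_alpha0 ops zero alpha i H"
  shows "cls zA = H"
proof
  show "cls zA \<subseteq> H"
    using assms(1,2) by (auto simp: thset_iff closed_theta_def)
  show "H \<subseteq> cls zA"
    using assms(3) H_sub zero_in_carrier by (auto simp: closed_alpha0_def intro!: thset_memI)
qed

context
  assumes ideal: "is_ideal ar E ops zero A H"
begin

lemma ideal_eval:
  "ideal_term ar E zero t Y \<Longrightarrow> (\<forall>v. \<rho> v \<in> A) \<Longrightarrow> (\<forall>v\<in>Y. \<rho> v \<in> H) \<Longrightarrow> eval ops \<rho> t \<in> H"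
  using ideal unfolding is_ideal_def by blast

lemma ideal_zero: "zA \<in> H"
proof -
  obtain h where h: "h \<in> H" using H_ne by auto
  have "ideal_term ar E zero zero {}"
    using wf_zero by (simp add: ideal_term_def subst_ground[OF vars_zero] derivable.refl)
  then have "eval ops (\<lambda>_. h) zero \<in> H" by (rule ideal_eval) (use h H_sub in auto)
  then show ?thesis by (simp add: eval_zero)
qed

lemma ideal_closed_theta: "closed_theta ops n theta H"
  unfolding closed_theta_def
proof (intro allI impI)
  fix h a assume h: "\<forall>s<n. h s \<in> H" and a: "a \<in> H"
  have "ideal_term ar E zero theta UNIV"
    using derivable_theta_zeros[OF wf_zero] wf_theta by (simp add: ideal_term_def)
  then have "eval ops (\<lambda>v. if v < n then h v else a) theta \<in> H"
    by (rule ideal_eval) (use h a H_sub in auto)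
  then show "th h a \<in> H" by (simp add: thA_def)
qed

lemma ideal_closed_alpha0: "i < n \<Longrightarrow> closed_alpha0 ops zero alpha i H"
  unfolding closed_alpha0_def
proof
  fix x assume i: "i < n" and x: "x \<in> H"
  define t where "t = subst (\<lambda>v. if v = 0 then Var 0 else zero) (alpha i)"
  have "subst (\<lambda>v. if v \<in> {0} then zero else Var v) t = subst (\<lambda>_. zero) (alpha i)"
    unfolding t_def subst_subst by (rule subst_cong) (auto simp: subst_ground[OF vars_zero])
  then have "ideal_term ar E zero t {0}"
    using derivable_alpha_diag[OF i wf_zero] wf_alpha[OF i] wf_zero
    by (auto simp: ideal_term_def t_def intro!: wf_trm_subst)
  then have "eval ops (\<lambda>_. x) t \<in> H" by (rule ideal_eval) (use x H_sub in auto)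
  moreover have "eval ops (\<lambda>_. x) t = al i x zA"
    unfolding t_def eval_subst alA_def by (rule eval_cong) (auto simp: eval_zero)
  ultimately show "al i x zA \<in> H" by simp
qed

lemma ideal_term_condA:
  assumes i: "i < n" and tau: "wf_trm ar tau" "vars tau \<subseteq> {0..<k}"
  shows "ideal_term ar E zero
           (subst (\<lambda>v. if v = 0 then subst (theta_slot n theta k) tau else tau) (alpha i)) {v. k \<le> v}"
proof -
  let ?Z = "\<lambda>v. if k \<le> v then zero else Var v"
  let ?\<sigma> = "\<lambda>v. if v = 0 then subst (theta_slot n theta k) tau else tau"
  have "subst ?Z tau = subst Var tau"
    by (rule subst_cong) (use tau(2) in auto)
  then have Z_tau: "subst ?Z tau = tau" by (simp add: subst_Var_id)
  have "derivable ar E (subst ?Z (subst (theta_slot n theta k) tau)) (subst Var tau)"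
    unfolding subst_subst
    by (rule derivable_subst_cong[OF tau(1)]) (use tau(2) derivable_theta_slot_zeros in auto)
  then have "derivable ar E (subst (\<lambda>v. subst ?Z (?\<sigma> v)) (alpha i)) (subst (\<lambda>_. tau) (alpha i))"
    by (intro derivable_subst_cong[OF wf_alpha[OF i]])
      (auto simp: Z_tau subst_Var_id intro: derivable.refl tau(1))
  then have "derivable ar E (subst ?Z (subst ?\<sigma> (alpha i))) zero"
    unfolding subst_subst using derivable_alpha_diag[OF i tau(1)] by (rule derivable.trans)
  moreover have "wf_trm ar (subst (theta_slot n theta k) tau)"
    by (intro wf_trm_subst tau(1)) (auto simp: theta_slot_def intro!: wf_trm_subst wf_theta)
  ultimately show ?thesis
    using tau(1) by (auto simp: ideal_term_def intro!: wf_trm_subst wf_alpha[OF i])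
qed

lemma ideal_condA:
  assumes i: "i < n" and tau: "wf_trm ar tau" "vars tau \<subseteq> {0..<k}"
  shows "condA ops n alpha theta A H tau k i"
  unfolding condA_def
proof (intro allI impI)
  fix a h assume a: "\<forall>r<k. a r \<in> A" and h: "\<forall>r<k. \<forall>s<n. h r s \<in> H"
  obtain h0 where h0: "h0 \<in> H" using H_ne by auto
  \<comment> \<open>variable \<open>k + r * n + s\<close> carries \<open>h r s\<close>\<close>
  define \<rho> where "\<rho> v = (if v < k then a v
      else if (v - k) div n < k then h ((v - k) div n) ((v - k) mod n) else h0)" for v
  have \<rho>H: "\<rho> v \<in> H" if "k \<le> v" for v
    using that h h0 n_pos by (auto simp: \<rho>_def)
  have "\<rho> v \<in> A" for v
    using \<rho>H[of v] a H_sub by (cases "v < k") (auto simp: \<rho>_def)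
  then have "eval ops \<rho> (subst (\<lambda>v. if v = 0 then subst (theta_slot n theta k) tau else tau) (alpha i)) \<in> H"
    using ideal_eval[OF ideal_term_condA[OF i tau]] \<rho>H by auto
  moreover have "eval ops \<rho> (subst (\<lambda>v. if v = 0 then subst (theta_slot n theta k) tau else tau) (alpha i))
      = al i (eval ops \<rho> (subst (theta_slot n theta k) tau)) (eval ops \<rho> tau)"
    unfolding alA_def by (subst eval_subst) (rule eval_cong, simp)
  moreover have "eval ops \<rho> tau = eval ops a tau"
    by (rule eval_cong) (use tau(2) in \<open>auto simp: \<rho>_def\<close>)
  moreover have "eval ops \<rho> (subst (theta_slot n theta k) tau) = eval ops (\<lambda>r. th (h r) (a r)) tau"
    unfolding eval_subst eval_theta_slot
  proof (rule eval_cong)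
    fix r assume "r \<in> vars tau"
    then have r: "r < k" using tau(2) by auto
    then show "th (\<lambda>s. \<rho> (k + r * n + s)) (\<rho> r) = th (h r) (a r)"
      by (auto simp: \<rho>_def intro: theta_cong)
  qed
  ultimately show "al i (eval ops (\<lambda>r. th (h r) (a r)) tau) (eval ops a tau) \<in> H"
    by simp
qed

lemma ideal_subalgebra:
  assumes semi: "semi_abelian ar E n zero alpha theta"
  shows "subalgebra ar ops A H"
  unfolding subalgebra_def is_alg_def
proof (intro conjI H_sub allI impI)
  fix f as assume l: "length as = ar f" and s: "set as \<subseteq> H"
  obtain h0 where h0: "h0 \<in> H" using H_ne by auto
  \<comment> \<open>in a semi-abelian variety the constant \<open>f(0, \<dots>, 0)\<close> equals \<open>0\<close>\<close>
  have "wf_trm ar (subst (\<lambda>_. zero) (op_trm ar f))"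
    by (rule wf_trm_subst) (simp_all add: wf_trm_op_trm wf_zero)
  moreover have "vars (subst (\<lambda>_. zero) (op_trm ar f)) = {}"
    by (simp add: vars_subst vars_zero)
  ultimately have "derivable ar E (subst (\<lambda>_. zero) (op_trm ar f)) zero"
    using semi unfolding semi_abelian_def by blast
  then have "ideal_term ar E zero (op_trm ar f) UNIV"
    using wf_trm_op_trm by (simp add: ideal_term_def)
  moreover define \<rho> where "\<rho> r = (if r < ar f then as ! r else h0)" for r
  moreover have "\<forall>v. \<rho> v \<in> H" using s h0 l by (auto simp: \<rho>_def)
  ultimately have "eval ops \<rho> (op_trm ar f) \<in> H" using H_sub by (auto intro!: ideal_eval)
  moreover have "map \<rho> [0..<ar f] = as" using l by (auto simp: \<rho>_def intro!: nth_equalityI)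
  ultimately show "ops f as \<in> H" by (simp add: eval_op_trm)
qed

end

lemma zero_in_if_closed_alpha:
  assumes "\<forall>i<n. closed_alpha ops alpha i H"
  shows "zA \<in> H"
proof -
  obtain h where h: "h \<in> H" using H_ne by auto
  then have "al 0 h h \<in> H" using assms n_pos by (simp add: closed_alpha_def)
  then show ?thesis using alpha_diag[of 0 h] n_pos h H_sub by auto
qed

lemma closed_alpha0_if_closed_alpha: "closed_alpha ops alpha i H \<Longrightarrow> zA \<in> H \<Longrightarrow> closed_alpha0 ops zero alpha i H"
  by (simp add: closed_alpha_def closed_alpha0_def)

lemma closed_alpha_if_condA_alpha:
  assumes zero: "zA \<in> H" and theta: "closed_theta ops n theta H"
    and alpha0: "\<forall>i<n. closed_alpha0 ops zero alpha i H"
    and j: "j < n" and condA: "\<forall>i<n. condA ops n alpha theta A H (alpha j) 2 i"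
  shows "closed_alpha ops alpha j H"
  unfolding closed_alpha_def
proof (intro ballI)
  fix x y assume x: "x \<in> H" and y: "y \<in> H"
  then have xy: "x \<in> A" "y \<in> A" using H_sub by auto
  \<comment> \<open>apply (A) to \<open>x = \<theta>(\<alpha>(x, 0), 0)\<close> and \<open>y = \<theta>(\<alpha>(y, 0), 0)\<close>\<close>
  define h where "h = (\<lambda>r :: nat. if r = 0 then (\<lambda>s. al s x zA) else (\<lambda>s. al s y zA))"
  have "al i (al j x y) zA \<in> H" if i: "i < n" for i
  proof -
    have "al i (eval ops (\<lambda>r. th (h r) zA) (alpha j)) (eval ops (\<lambda>_. zA) (alpha j)) \<in> H"
      by (rule condAD[OF condA[rule_format, OF i] zero_in_carrier])
        (use alpha0 x y in \<open>simp add: h_def closed_alpha0_def\<close>)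
    moreover have "eval ops (\<lambda>r. th (h r) zA) (alpha j) = al j x y"
      unfolding alA_def
    proof (rule eval_cong)
      fix v assume "v \<in> vars (alpha j)"
      then show "th (h v) zA = (if v = 0 then x else y)"
        using vars_alpha[OF j] theta_alpha[OF _ zero_in_carrier] xy by (auto simp: h_def)
    qed
    moreover have "eval ops (\<lambda>_. zA) (alpha j) = zA"
      using alpha_diag[OF j zero_in_carrier] by (simp add: alA_def)
    ultimately show ?thesis by simp
  qed
  then have "th (\<lambda>i. al i (al j x y) zA) zA \<in> H"
    using theta zero by (simp add: closed_theta_def)
  then show "al j x y \<in> H"
    using theta_alpha[OF alpha_in_carrier[OF j xy] zero_in_carrier] by simp
qed

lemma condB_if_condA_theta:
  assumes zero: "zA \<in> H" and alpha: "\<forall>i<n. closed_alpha ops alpha i H"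
    and condA: "condA ops n alpha theta A H theta (Suc n) i"
  shows "condB ops n alpha theta A H i"
  unfolding condB_def
proof (intro allI impI ballI)
  fix a h h' assume a: "a \<in> A" and hh': "\<forall>s<n. h s \<in> H \<and> h' s \<in> H"
  \<comment> \<open>apply (A) to \<open>h r = \<theta>(\<alpha>(h r, h' r), h' r)\<close> and \<open>a = \<theta>(0, a)\<close>\<close>
  define b where "b = (\<lambda>r. if r < n then h' r else a)"
  define g where "g = (\<lambda>r. if r < n then (\<lambda>s. al s (h r) (h' r)) else (\<lambda>_. zA))"
  have "al i (eval ops (\<lambda>r. th (g r) (b r)) theta) (eval ops b theta) \<in> H"
  proof (rule condAD[OF condA])
    show "b r \<in> A" if "r < Suc n" for r using hh' H_sub a by (auto simp: b_def)
    show "g r s \<in> H" if "r < Suc n" "s < n" for r s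
      using that hh' alpha zero by (auto simp: g_def closed_alpha_def)
  qed
  moreover have "eval ops b theta = th h' a" by (simp add: thA_def b_def)
  moreover have "eval ops (\<lambda>r. th (g r) (b r)) theta = th h a"
    unfolding thA_def[of ops n theta h a]
  proof (rule eval_cong)
    fix r assume "r \<in> vars theta"
    then have "r \<le> n" using vars_theta by auto
    show "th (g r) (b r) = (if r < n then h r else a)"
    proof (cases "r < n")
      case True
      then have "h r \<in> A" "h' r \<in> A" using hh' H_sub by auto
      then show ?thesis using True theta_alpha by (simp add: g_def b_def)
    next
      case False
      then show ?thesis using \<open>r \<le> n\<close> theta_zeros[OF a] by (simp add: g_def b_def)
    qed
  qed
  ultimately show "al i (th h a) (th h' a) \<in> H" by simp
qed

lemma condC_if_condA:
  assumes zero: "zA \<in> H" and condA: "condA ops n alpha theta A H tau k i"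
    and tau: "vars tau \<subseteq> {0..<k}"
  shows "condC ops n alpha theta A H tau k i"
  unfolding condC_def
proof (intro allI impI)
  fix a j h assume a: "\<forall>r<k. a r \<in> A" and j: "j < k" and h: "\<forall>s<n. h s \<in> H"
  define g where "g r = (if r = j then h else (\<lambda>_. zA))" for r
  have "al i (eval ops (\<lambda>r. th (g r) (a r)) tau) (eval ops a tau) \<in> H"
    by (rule condAD[OF condA]) (use a h zero in \<open>auto simp: g_def\<close>)
  moreover have "eval ops (\<lambda>r. th (g r) (a r)) tau = eval ops (a(j := th h (a j))) tau"
    by (rule eval_cong) (use tau a theta_zeros in \<open>auto simp: g_def\<close>)
  ultimately show "al i (eval ops (a(j := th h (a j))) tau) (eval ops a tau) \<in> H"
    by simp
qed

context
  assumes condB: "\<forall>i<n. condB ops n alpha theta A H i"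
begin

lemma zero_in_if_condB: "zA \<in> H"
proof -
  obtain h where h: "h \<in> H" using H_ne by auto
  then have "th (\<lambda>_. h) h \<in> A" using H_sub by (auto intro: theta_in_carrier)
  moreover have "al 0 (th (\<lambda>_. h) h) (th (\<lambda>_. h) h) \<in> H"
    using condB n_pos h H_sub by (auto simp: condB_def)
  ultimately show ?thesis using alpha_diag n_pos by auto
qed

lemma thset_pairwise:
  assumes "a \<in> A" and "x \<in> cls a" and "y \<in> cls a"
  shows "x \<in> cls y"
proof (rule thset_memI)
  show "x \<in> A" "y \<in> A" using assms thset_subset_carrier by auto
  show "al i x y \<in> H" if "i < n" for i
    using assms(2,3) condB that \<open>a \<in> A\<close> by (auto simp: thset_iff condB_def)
qed

lemma thset_eq:
  assumes a: "a \<in> A" and b: "b \<in> cls a"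
  shows "cls a = cls b"
proof -
  have b_A: "b \<in> A" using a b thset_subset_carrier by auto
  have a_b: "a \<in> cls b" using thset_pairwise[OF a thset_self[OF zero_in_if_condB a] b] .
  show ?thesis
  proof
    show "cls a \<subseteq> cls b" using thset_pairwise[OF a _ b] by blast
    show "cls b \<subseteq> cls a" using thset_pairwise[OF b_A _ a_b] by blast
  qed
qed

lemma simH_class:
  assumes a: "a \<in> A"
  shows "simH ops n theta A H `` {a} = cls a"
proof
  show "simH ops n theta A H `` {a} \<subseteq> cls a"
    using thset_self[OF zero_in_if_condB] by (auto simp: simH_def)
  show "cls a \<subseteq> simH ops n theta A H `` {a}"
    using a thset_eq[OF a] thset_subset_carrier[OF a] by (auto simp: simH_def)
qed

end

lemma congruence_if_condC:
  assumes classes: "\<forall>a\<in>A. simH ops n theta A H `` {a} = cls a"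
    and condC: "\<forall>i<n. \<forall>f. condC ops n alpha theta A H (op_trm ar f) (ar f) i"
  shows "congruence_on ar ops A (simH ops n theta A H)"
proof (rule congruence_onI_single_argument)
  show "equiv A (simH ops n theta A H)"
    by (auto simp: simH_def equiv_def refl_on_def sym_def trans_def)
  show "is_alg ar A ops" using alg by (rule V_alg_is_alg)
  fix f cs j b
  assume cs: "length cs = ar f" "set cs \<subseteq> A" and j: "j < ar f"
    and rel: "(cs ! j, b) \<in> simH ops n theta A H"
  have "cs ! j \<in> A" using cs j by auto
  then have "b \<in> cls (cs ! j)" using rel classes by auto
  then obtain h where b: "b = th h (cs ! j)" and h: "\<forall>s<n. h s \<in> H"
    unfolding thset_iff by blast
  have b_A: "b \<in> A" using rel by (simp add: simH_def)
  have eval_cs: "eval ops (\<lambda>r. cs ! r) (op_trm ar f) = ops f cs"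
    by (simp add: eval_op_trm map_nth flip: cs(1))
  have eval_upd: "eval ops ((\<lambda>r. cs ! r)(j := b)) (op_trm ar f) = ops f (cs[j := b])"
    using cs(1) j by (auto simp: eval_op_trm nth_list_update intro!: nth_equalityI arg_cong[where f="ops f"])
  have "set (cs[j := b]) \<subseteq> A" using cs(2) b_A set_update_subset_insert[of cs j b] by blast
  then have "ops f (cs[j := b]) \<in> A" "ops f cs \<in> A"
    using V_alg_is_alg[OF alg] cs by (simp_all add: is_alg_def)
  moreover have "al i (ops f (cs[j := b])) (ops f cs) \<in> H" if "i < n" for i
  proof -
    have "al i (eval ops ((\<lambda>r. cs ! r)(j := th h (cs ! j))) (op_trm ar f))
                 (eval ops (\<lambda>r. cs ! r) (op_trm ar f)) \<in> H"
      by (rule condCD[OF condC[rule_format, OF that] _ j]) (use cs h in auto)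
    then show ?thesis using b eval_cs eval_upd by simp
  qed
  ultimately have "ops f (cs[j := b]) \<in> cls (ops f cs)" by (rule thset_memI)
  then show "(ops f cs, ops f (cs[j := b])) \<in> simH ops n theta A H"
    using classes \<open>ops f cs \<in> A\<close> by auto
qed

lemma subalgebra_closed:
  assumes "subalgebra ar ops A H"
  shows "zA \<in> H" and "closed_theta ops n theta H" and "\<forall>i<n. closed_alpha ops alpha i H"
proof -
  have alg_H: "is_alg ar H ops" using assms by (simp add: subalgebra_def)
  obtain h where "h \<in> H" using H_ne by auto
  then have "eval ops (\<lambda>_. h) zero \<in> H" by (intro eval_in_carrier[OF alg_H wf_zero])
  then show "zA \<in> H" by (simp add: eval_zero)
  show "closed_theta ops n theta H" unfolding closed_theta_def thA_def
    by (intro allI impI eval_in_carrier[OF alg_H wf_theta]) auto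
  show "\<forall>i<n. closed_alpha ops alpha i H" unfolding closed_alpha_def alA_def
    by (intro allI impI ballI eval_in_carrier[OF alg_H wf_alpha]) auto
qed

end

theorem theorem2p5:
  fixes ar :: "'f \<Rightarrow> nat"
    and E :: "('f trm \<times> 'f trm) set"
    and n :: nat and zero :: "'f trm" and alpha :: "nat \<Rightarrow> 'f trm" and theta :: "'f trm"
    and A :: "'a set" and ops :: "'f \<Rightarrow> 'a list \<Rightarrow> 'a" and H :: "'a set"
  assumes bit: "bit_speciale ar E n zero alpha theta"
    and alg: "V_alg ar E A ops"
    and HA: "H \<subseteq> A" and Hne: "H \<noteq> {}"
  defines "c_i \<equiv> is_ideal ar E ops zero A H"
    and "c_ii \<equiv> closed_theta ops n theta H \<and> (\<forall>i<n. closed_alpha ops alpha i H) \<and>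
          (\<forall>i<n. (\<forall>f. condA ops n alpha theta A H (op_trm ar f) (ar f) i) \<and>
                 condA ops n alpha theta A H theta (Suc n) i)"
    and "c_iii \<equiv> zeroA ops zero \<in> H \<and> closed_theta ops n theta H \<and>
          (\<forall>i<n. closed_alpha0 ops zero alpha i H) \<and>
          (\<forall>i<n. (\<forall>f. condA ops n alpha theta A H (op_trm ar f) (ar f) i) \<and>
                 condA ops n alpha theta A H theta (Suc n) i \<and>
                 (\<forall>j<n. condA ops n alpha theta A H (alpha j) 2 i))"
    and "c_iv \<equiv> closed_theta ops n theta H \<and> (\<forall>i<n. closed_alpha0 ops zero alpha i H) \<and>
          (\<forall>i<n. \<forall>f. condA ops n alpha theta A H (op_trm ar f) (ar f) i) \<and>
          (\<forall>i<n. condB ops n alpha theta A H i)"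
    and "c_v \<equiv> closed_theta ops n theta H \<and> (\<forall>i<n. closed_alpha0 ops zero alpha i H) \<and>
          (\<forall>i<n. condB ops n alpha theta A H i) \<and>
          (\<forall>i<n. \<forall>f. condC ops n alpha theta A H (op_trm ar f) (ar f) i)"
    and "c_vi \<equiv> zeroA ops zero \<in> H \<and> closed_theta ops n theta H \<and>
          (\<forall>i<n. closed_alpha0 ops zero alpha i H) \<and>
          (\<forall>a\<in>A. simH ops n theta A H `` {a} = thset ops n theta H a) \<and>
          (\<forall>i<n. \<forall>f. condC ops n alpha theta A H (op_trm ar f) (ar f) i)"
    and "c_vii \<equiv> congruence_on ar ops A (simH ops n theta A H) \<and>
          H = simH ops n theta A H `` {zeroA ops zero}"
    and "s_ii \<equiv> subalgebra ar ops A H \<and>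
          (\<forall>i<n. (\<forall>f. condA ops n alpha theta A H (op_trm ar f) (ar f) i) \<and>
                 condA ops n alpha theta A H theta (Suc n) i)"
    and "s_iii \<equiv> subalgebra ar ops A H \<and>
          (\<forall>i<n. (\<forall>f. condA ops n alpha theta A H (op_trm ar f) (ar f) i) \<and>
                 condA ops n alpha theta A H theta (Suc n) i \<and>
                 (\<forall>j<n. condA ops n alpha theta A H (alpha j) 2 i))"
    and "s_iv \<equiv> subalgebra ar ops A H \<and>
          (\<forall>i<n. \<forall>f. condA ops n alpha theta A H (op_trm ar f) (ar f) i) \<and>
          (\<forall>i<n. condB ops n alpha theta A H i)"
    and "s_v \<equiv> subalgebra ar ops A H \<and>
          (\<forall>i<n. condB ops n alpha theta A H i) \<and>
          (\<forall>i<n. \<forall>f. condC ops n alpha theta A H (op_trm ar f) (ar f) i)"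
  shows "(c_i \<longleftrightarrow> c_ii) \<and> (c_i \<longleftrightarrow> c_iii) \<and> (c_i \<longleftrightarrow> c_iv) \<and> (c_i \<longleftrightarrow> c_v) \<and>
         (c_i \<longleftrightarrow> c_vi) \<and> (c_i \<longleftrightarrow> c_vii) \<and>
         (semi_abelian ar E n zero alpha theta \<longrightarrow>
            (c_i \<longleftrightarrow> s_ii) \<and> (c_i \<longleftrightarrow> s_iii) \<and> (c_i \<longleftrightarrow> s_iv) \<and> (c_i \<longleftrightarrow> s_v))"
proof -
  interpret bit_speciale_subset ar E n zero alpha theta A ops H
    using bit alg HA Hne by unfold_locales
  have i_iii: "c_i \<Longrightarrow> c_iii" unfolding assms(5,7)
    by (auto intro!: ideal_zero ideal_closed_theta ideal_closed_alpha0 ideal_condA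
        wf_trm_op_trm wf_theta wf_alpha vars_theta vars_alpha simp: vars_op_trm)
  have iii_ii: "c_iii \<Longrightarrow> c_ii" unfolding assms(6,7)
    using closed_alpha_if_condA_alpha by blast
  have ii_iv: "c_ii \<Longrightarrow> c_iv" unfolding assms(6,8)
    using zero_in_if_closed_alpha closed_alpha0_if_closed_alpha condB_if_condA_theta by blast
  have iv_v: "c_iv \<Longrightarrow> c_v" unfolding assms(8,9)
    using zero_in_if_condB condC_if_condA vars_op_trm by (metis order_refl)
  have v_vi: "c_v \<Longrightarrow> c_vi" unfolding assms(9,10)
    using zero_in_if_condB simH_class by blast
  have vi_vii: "c_vi \<Longrightarrow> c_vii" unfolding assms(10,11)
    using congruence_if_condC thset_zero zero_in_carrier by metis
  have vii_i: "c_vii \<Longrightarrow> c_i" unfolding assms(5,11)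
    using ideal_if_congruence_kernel[OF alg _ vars_zero _ Hne] by blast
  have subalgebra: "subalgebra ar ops A H \<Longrightarrow>
      (s_ii \<longleftrightarrow> c_ii) \<and> (s_iii \<longleftrightarrow> c_iii) \<and> (s_iv \<longleftrightarrow> c_iv) \<and> (s_v \<longleftrightarrow> c_v)"
    unfolding assms(6-9,12-15) using subalgebra_closed closed_alpha0_if_closed_alpha by blast
  have "semi_abelian ar E n zero alpha theta \<Longrightarrow> c_i \<Longrightarrow> subalgebra ar ops A H"
    unfolding assms(5) by (rule ideal_subalgebra)
  moreover have "s_ii \<or> s_iii \<or> s_iv \<or> s_v \<Longrightarrow> subalgebra ar ops A H"
    unfolding assms(12-15) by blast
  ultimately show ?thesis
    using i_iii iii_ii ii_iv iv_v v_vi vi_vii vii_i subalgebra by blast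
qed

end
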